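(* Let $n$ be a power of two, $\Delta=50+1000\log n$, and let $X$ be uniformly random over $\{0,1\}^n$. Then with probability at least $1/2$, every segment $z^X_i$ ($i=1,\dots,\ell_X$) of the marker segmentation of $X$ has length at most $\Delta$.
   Context: Logarithms are base $2$. Marker segmentation of $x\in\{0,1\}^n$: split $x$ into consecutive substrings $z^x_1,\dots,z^x_{\ell_x}$ by cutting immediately after each occurrence of the marker $0011$; every segment except possibly the last ends with $0011$ and contains exactly one occurrence of $0011$, and the last segment is the (possibly marker-free) remainder if nonempty. *)

theory Defs
  imports Complex_Main
begin

text \<open>Bit strings are lists of booleans, True = 1, False = 0.
  The marker is 0011.\<close>

definition marker :: "bool list" where
  "marker = [False, False, True, True]"

definition first_marker :: "bool list \<Rightarrow> nat option" where
  "first_marker xs =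
     (if \<exists>i. i + 4 \<le> length xs \<and> take 4 (drop i xs) = marker
      then Some (LEAST i. i + 4 \<le> length xs \<and> take 4 (drop i xs) = marker)
      else None)"

lemma first_marker_le: "first_marker xs = Some i \<Longrightarrow> i + 4 \<le> length xs"
  unfolding first_marker_def
  by (auto split: if_splits intro: LeastI2_ex)

function marker_segments :: "bool list \<Rightarrow> bool list list" where
  "marker_segments xs =
     (case first_marker xs of
        None \<Rightarrow> (if xs = [] then [] else [xs])
      | Some i \<Rightarrow> take (i + 4) xs # marker_segments (drop (i + 4) xs))"
  by pat_completeness auto
termination
  by (relation "measure length") (auto dest: first_marker_le)

end

theory Submission
  imports Defs "HOL-Library.Sublist" "HOL-Library.Cardinality"
begin

text \<open>A segment of length greater than \<open>4 m\<close> contains no marker before its final four bits,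
  so its first \<open>4 m\<close> bits, cut into \<open>m\<close> aligned blocks of length 4, avoid the marker in every
  block. For a fixed starting position a uniformly random string has this property with
  probability \<open>(15/16)^m\<close>, so by the union bound over the \<open>n\<close> starting positions some segment
  is longer than \<open>4 m\<close> with probability at most \<open>n (15/16)^m\<close>. For \<open>n = 2^k\<close> and
  \<open>m = 250 k + 12\<close> this is at most \<open>1/2\<close>, because \<open>(15/16)^12 \<le> 1/2\<close>, while
  \<open>4 m = 1000 k + 48 \<le> \<Delta>\<close>.\<close>

lemma finite_lists_length_eq_finite: "finite {xs :: 'a::finite list. length xs = n}"
  using finite_lists_length_eq[of "UNIV :: 'a set" n] by simp

lemma card_lists_length_eq_finite:
  "card {xs :: 'a::finite list. length xs = n} = CARD('a) ^ n"
  using card_lists_length_eq[of "UNIV :: 'a set" n] by simp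

lemma card_take_drop_split:
  "card {x :: 'a list. length x = a + b \<and> P (take a x) \<and> Q (drop a x)}
   = card {u. length u = a \<and> P u} * card {v. length v = b \<and> Q v}"
proof -
  let ?A = "{u :: 'a list. length u = a \<and> P u}"
  let ?B = "{v :: 'a list. length v = b \<and> Q v}"
  have "{x. length x = a + b \<and> P (take a x) \<and> Q (drop a x)} = (\<lambda>(u, v). u @ v) ` (?A \<times> ?B)"
    by (auto intro!: image_eqI[where x = "(take a x, drop a x)" for x])
  moreover have "inj_on (\<lambda>(u, v). u @ v) (?A \<times> ?B)"
    by (auto simp: inj_on_def)
  ultimately show ?thesis
    by (simp add: card_image card_cartesian_product)
qed

lemma card_window_in:
  fixes A :: "'a::finite list set"
  assumes "A \<subseteq> {u. length u = l}" and "p + l \<le> n"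
  shows "card {x. length x = n \<and> take l (drop p x) \<in> A} = CARD('a) ^ (n - l) * card A"
proof -
  have "card {x. length x = n \<and> take l (drop p x) \<in> A}
      = CARD('a) ^ p * card {v. length v = n - p \<and> take l v \<in> A}"
    using card_take_drop_split[of p "n - p" "\<lambda>_. True" "\<lambda>v. take l v \<in> A"] assms(2)
    by (simp add: card_lists_length_eq_finite)
  also have "card {v. length v = n - p \<and> take l v \<in> A} = card A * CARD('a) ^ (n - p - l)"
  proof -
    have "{u. length u = l \<and> u \<in> A} = A"
      using assms(1) by auto
    then show ?thesis
      using card_take_drop_split[of l "n - p - l" "\<lambda>u. u \<in> A" "\<lambda>_. True"] assms(2)
      by (simp add: card_lists_length_eq_finite)
  qed
  finally show ?thesis
    using assms(2) by (simp add: power_add[symmetric])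
qed

lemma card_window_in_le:
  fixes A :: "'a::finite list set"
  assumes "A \<subseteq> {u. length u = l}" and "0 < l"
  shows "real (card {x. length x = n \<and> take l (drop p x) \<in> A})
         \<le> real CARD('a) ^ n * (real (card A) / real CARD('a) ^ l)"
proof (cases "p + l \<le> n")
  case True
  have "real CARD('a) ^ n = real CARD('a) ^ (n - l) * real CARD('a) ^ l"
    using True by (simp flip: power_add)
  then show ?thesis
    using card_window_in[OF assms(1) True] by simp
next
  case False
  have "length (take l (drop p x)) < l" if "length x = n" for x :: "'a list"
    using False that assms(2) by simp
  then have empty: "{x. length x = n \<and> take l (drop p x) \<in> A} = {}"
    using assms by fastforce
  show ?thesis
    unfolding empty by simp
qed

definition marker_free_blocks :: "nat \<Rightarrow> bool list set" where
  "marker_free_blocks m =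
     {w. length w = 4 * m \<and> (\<forall>j<m. take 4 (drop (4 * j) w) \<noteq> marker)}"

lemma marker_free_blocks_Suc:
  "marker_free_blocks (Suc m) =
     {x. length x = 4 + 4 * m \<and> take 4 x \<noteq> marker \<and> drop 4 x \<in> marker_free_blocks m}"
  by (auto simp: marker_free_blocks_def All_less_Suc2 add.commute)

lemma card_marker_free_blocks: "card (marker_free_blocks m) = 15 ^ m"
proof (induction m)
  case 0
  have "marker_free_blocks 0 = {[]}"
    by (auto simp: marker_free_blocks_def)
  then show ?case
    by simp
next
  case (Suc m)
  have "{u :: bool list. length u = 4 \<and> u \<noteq> marker} = {u. length u = 4} - {marker}"
    by auto
  then have "card {u :: bool list. length u = 4 \<and> u \<noteq> marker} = 15"
    by (simp add: card_lists_length_eq_finite marker_def)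
  moreover have "{v. length v = 4 * m \<and> v \<in> marker_free_blocks m} = marker_free_blocks m"
    by (auto simp: marker_free_blocks_def)
  ultimately show ?case
    using card_take_drop_split[of 4 "4 * m" "\<lambda>u. u \<noteq> marker" "\<lambda>v. v \<in> marker_free_blocks m"]
    by (simp add: marker_free_blocks_Suc Suc.IH)
qed

lemma first_marker_None_no_marker:
  "first_marker xs = None \<Longrightarrow> i + 4 \<le> length xs \<Longrightarrow> take 4 (drop i xs) \<noteq> marker"
  by (auto simp: first_marker_def split: if_splits)

lemma first_marker_Some_less:
  assumes "first_marker xs = Some i" and "j < i"
  shows "take 4 (drop j xs) \<noteq> marker"
proof -
  have "i = (LEAST i. i + 4 \<le> length xs \<and> take 4 (drop i xs) = marker)"
    using assms(1) by (auto simp: first_marker_def split: if_splits)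
  then show ?thesis
    using assms first_marker_le[OF assms(1)] not_less_Least by fastforce
qed

declare marker_segments.simps[simp del]

lemma marker_segments_None:
  "first_marker xs = None \<Longrightarrow> marker_segments xs = (if xs = [] then [] else [xs])"
  by (subst marker_segments.simps) simp

lemma marker_segments_Some:
  "first_marker xs = Some i \<Longrightarrow>
     marker_segments xs = take (i + 4) xs # marker_segments (drop (i + 4) xs)"
  by (subst marker_segments.simps) simp

lemma marker_segments_sublist: "z \<in> set (marker_segments xs) \<Longrightarrow> sublist z xs"
proof (induction xs rule: marker_segments.induct)
  case (1 xs)
  show ?case
  proof (cases "first_marker xs")
    case None
    then show ?thesis
      using "1.prems" by (auto simp: marker_segments_None split: if_splits)
  next
    case (Some i)
    then have "z = take (i + 4) xs \<or> z \<in> set (marker_segments (drop (i + 4) xs))"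
      using "1.prems" by (simp add: marker_segments_Some)
    then show ?thesis
      using "1.IH"[OF Some] sublist_order.order_trans[OF _ sublist_drop] by blast
  qed
qed

lemma marker_segment_inner_marker_free:
  "z \<in> set (marker_segments xs) \<Longrightarrow> j + 4 < length z \<Longrightarrow> take 4 (drop j z) \<noteq> marker"
proof (induction xs rule: marker_segments.induct)
  case (1 xs)
  show ?case
  proof (cases "first_marker xs")
    case None
    then show ?thesis
      using "1.prems" first_marker_None_no_marker by (auto simp: marker_segments_None split: if_splits)
  next
    case (Some i)
    then consider (head) "z = take (i + 4) xs" | (tail) "z \<in> set (marker_segments (drop (i + 4) xs))"
      using "1.prems"(1) by (auto simp: marker_segments_Some)
    then show ?thesis
    proof cases
      case head
      moreover have "j < i"
        using head "1.prems"(2) first_marker_le[OF Some] by simp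
      ultimately have "take 4 (drop j z) = take 4 (drop j xs)"
        by (simp add: drop_take)
      then show ?thesis
        using first_marker_Some_less[OF Some \<open>j < i\<close>] by simp
    next
      case tail
      then show ?thesis
        using "1.IH"[OF Some] "1.prems"(2) by blast
    qed
  qed
qed

lemma long_marker_segment_window:
  assumes "z \<in> set (marker_segments x)" and "4 * m < length z"
  obtains p where "p < length x" and "take (4 * m) (drop p x) \<in> marker_free_blocks m"
proof -
  obtain ps ss where x: "x = ps @ z @ ss"
    using marker_segments_sublist[OF assms(1)] by (auto simp: sublist_def)
  have "take 4 (drop (4 * j) (take (4 * m) z)) \<noteq> marker" if "j < m" for j
  proof -
    have "take 4 (drop (4 * j) (take (4 * m) z)) = take 4 (drop (4 * j) z)"
      using that by (simp add: drop_take)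
    then show ?thesis
      using marker_segment_inner_marker_free[OF assms(1), of "4 * j"] that assms(2) by simp
  qed
  then have "take (4 * m) (drop (length ps) x) \<in> marker_free_blocks m"
    using x assms(2) by (simp add: marker_free_blocks_def)
  moreover have "length ps < length x"
    using x assms(2) by auto
  ultimately show thesis
    using that by blast
qed

lemma card_long_marker_segment_le:
  assumes "0 < m"
  shows "real (card {x :: bool list. length x = n \<and> (\<exists>z \<in> set (marker_segments x). 4 * m < length z)})
         \<le> real n * 2 ^ n * (15 / 16) ^ m"
proof -
  define W where "W p = {x :: bool list. length x = n \<and> take (4 * m) (drop p x) \<in> marker_free_blocks m}"
    for p
  have card_W: "real (card (W p)) \<le> 2 ^ n * (15 / 16) ^ m" for p
  proof -
    have "marker_free_blocks m \<subseteq> {u. length u = 4 * m}"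
      by (auto simp: marker_free_blocks_def)
    then have "real (card (W p)) \<le> 2 ^ n * (15 ^ m / 2 ^ (4 * m))"
      using card_window_in_le[of "marker_free_blocks m" "4 * m" n p] assms
      by (simp add: W_def card_marker_free_blocks)
    also have "\<dots> = 2 ^ n * (15 / 16) ^ m"
      by (simp add: power_mult power_divide)
    finally show ?thesis .
  qed
  have "finite (\<Union>p<n. W p)"
    by (auto simp: W_def intro: finite_subset[OF _ finite_lists_length_eq_finite])
  moreover have "{x. length x = n \<and> (\<exists>z \<in> set (marker_segments x). 4 * m < length z)} \<subseteq> (\<Union>p<n. W p)"
    by (auto simp: W_def elim!: long_marker_segment_window)
  ultimately have "card {x. length x = n \<and> (\<exists>z \<in> set (marker_segments x). 4 * m < length z)}
      \<le> card (\<Union>p<n. W p)"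
    by (rule card_mono)
  also have "\<dots> \<le> (\<Sum>p<n. card (W p))"
    by (rule card_UN_le) simp
  finally have "real (card {x. length x = n \<and> (\<exists>z \<in> set (marker_segments x). 4 * m < length z)})
      \<le> (\<Sum>p<n. real (card (W p)))"
    by (simp flip: of_nat_sum)
  also have "\<dots> \<le> (\<Sum>p<n. 2 ^ n * (15 / 16) ^ m)"
    by (rule sum_mono) (rule card_W)
  finally show ?thesis
    by simp
qed

lemma card_short_marker_segments_ge:
  assumes "0 < m"
  shows "2 ^ n * (1 - real n * (15 / 16) ^ m)
         \<le> real (card {x :: bool list. length x = n \<and> (\<forall>z \<in> set (marker_segments x). length z \<le> 4 * m)})"
proof -
  define long where
    "long = {x :: bool list. length x = n \<and> (\<exists>z \<in> set (marker_segments x). 4 * m < length z)}"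
  have sub: "long \<subseteq> {x. length x = n}"
    by (auto simp: long_def)
  have "{x. length x = n \<and> (\<forall>z \<in> set (marker_segments x). length z \<le> 4 * m)} = {x. length x = n} - long"
    by (auto simp: long_def not_le)
  moreover have "card long \<le> 2 ^ n"
    using card_mono[OF finite_lists_length_eq_finite sub] by (simp add: card_lists_length_eq_finite)
  ultimately have "real (card {x. length x = n \<and> (\<forall>z \<in> set (marker_segments x). length z \<le> 4 * m)})
      = 2 ^ n - real (card long)"
    using card_Diff_subset[OF finite_subset[OF sub finite_lists_length_eq_finite] sub]
    by (simp add: of_nat_diff card_lists_length_eq_finite)
  moreover have "real (card long) \<le> real n * 2 ^ n * (15 / 16) ^ m"
    unfolding long_def using assms by (rule card_long_marker_segment_le)
  ultimately show ?thesis
    by (simp add: algebra_simps)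
qed

lemma two_pow_mult_15_16_pow_le: "(2::real) ^ k * (15 / 16) ^ (250 * k + 12) \<le> 1 / 2"
proof -
  have half: "(15 / 16 :: real) ^ 12 \<le> 1 / 2"
    by (simp add: power_divide)
  moreover have "(15 / 16 :: real) ^ 250 \<le> (15 / 16) ^ 12"
    by (rule power_decreasing) simp_all
  ultimately have "2 * (15 / 16 :: real) ^ 250 \<le> 1"
    by linarith
  then have "(2 * (15 / 16 :: real) ^ 250) ^ k \<le> 1"
    by (intro power_le_one) simp_all
  then have "(2 * (15 / 16 :: real) ^ 250) ^ k * (15 / 16) ^ 12 \<le> 1 * (1 / 2)"
    using half by (intro mult_mono) simp_all
  moreover have "(2::real) ^ k * (15 / 16) ^ (250 * k + 12) = (2 * (15 / 16) ^ 250) ^ k * (15 / 16) ^ 12"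
    by (simp only: power_add power_mult power_mult_distrib mult.assoc)
  ultimately show ?thesis
    by simp
qed

theorem lemma6:
  fixes n k :: nat
  assumes "n = 2 ^ k"
  shows "real (card {x :: bool list. length x = n \<and>
            (\<forall>z \<in> set (marker_segments x). real (length z) \<le> 50 + 1000 * log 2 (real n))})
         \<ge> (1/2) * real (card {x :: bool list. length x = n})"
proof -
  define m where "m = 250 * k + 12"
  have "(1 / 2) * real (card {x :: bool list. length x = n}) \<le> 2 ^ n * (1 - real n * (15 / 16) ^ m)"
    using two_pow_mult_15_16_pow_le[of k] assms by (simp add: m_def card_lists_length_eq_finite)
  also have "\<dots> \<le> real (card {x :: bool list. length x = n \<and>
                   (\<forall>z \<in> set (marker_segments x). length z \<le> 4 * m)})"
    by (rule card_short_marker_segments_ge) (simp add: m_def)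
  also have "\<dots> \<le> real (card {x :: bool list. length x = n \<and>
                   (\<forall>z \<in> set (marker_segments x). real (length z) \<le> 50 + 1000 * log 2 (real n))})"
  proof (intro of_nat_mono card_mono)
    have "real (4 * m) \<le> 50 + 1000 * log 2 (real n)"
      using assms by (simp add: m_def log_nat_power)
    then show "{x :: bool list. length x = n \<and> (\<forall>z \<in> set (marker_segments x). length z \<le> 4 * m)}
      \<subseteq> {x. length x = n \<and> (\<forall>z \<in> set (marker_segments x). real (length z) \<le> 50 + 1000 * log 2 (real n))}"
      by (auto simp del: of_nat_mult intro: order_trans[rotated])
  qed (simp add: finite_Collect_conjI finite_lists_length_eq_finite)
  finally show ?thesis .
qed

end
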